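(* Let $\kappa\ge 1$ be an integer, let $\lambda_1^\Sigma\ge\lambda_2^\Sigma\ge\cdots\ge\lambda_\kappa^\Sigma>0$ and $\lambda_1^G,\dots,\lambda_\kappa^G>0$ be real numbers, and let $X_1,\dots,X_\kappa$ be i.i.d. exponential random variables with unit mean. Define $$X=\frac{\sum_{j=1}^{\kappa}\lambda_j^G(\lambda_j^\Sigma)^2X_j}{1+\sum_{j=1}^{\kappa}\lambda_j^G\lambda_j^\Sigma X_j},$$ and for real $x$ and $j=1,\dots,\kappa$ with $x\neq\lambda_j^\Sigma$ put $c_j(x)=\frac{1}{\lambda_j^G\lambda_j^\Sigma(\lambda_j^\Sigma-x)}$. Set $\lambda_{\kappa+1}^\Sigma:=0$. Then $F_X(x):=\mathbb{P}(X\le x)$ satisfies: $F_X(x)=0$ for $x\le 0$; $F_X(x)=1$ for $x\ge\lambda_1^\Sigma$; and for each $j\in\{1,\dots,\kappa\}$ and each $x$ with $\lambda_{j+1}^\Sigma<x<\lambda_j^\Sigma$ at which $c_1(x),\dots,c_\kappa(x)$ are pairwise distinct, $$F_X(x)=1-\sum_{i=1}^{j}\Bigg(\prod_{\substack{m=1\\ m\neq i}}^{\kappa}\frac{c_m(x)}{c_m(x)-c_i(x)}\Bigg)e^{-c_i(x)\,x}.$$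
   Context: $X$ is the factor of the destination SNR in a dual-hop amplify-and-forward MIMO relay system that accounts for the relay-to-destination link and the relay power allocation: $\lambda_j^\Sigma$ are the nonzero eigenvalues of the relay's antenna correlation matrix in decreasing order and $\lambda_j^G$ are the relay gains allocated to the corresponding eigenmodes. For example, for $\kappa=2$ the formula reads $F_X(x)=1-\frac{c_2}{c_2-c_1}e^{-c_1x}-\frac{c_1}{c_1-c_2}e^{-c_2x}$ for $0<x<\lambda_2^\Sigma$ and $F_X(x)=1-\frac{c_2}{c_2-c_1}e^{-c_1x}$ for $\lambda_2^\Sigma<x<\lambda_1^\Sigma$. *)

theory Defs
  imports "HOL-Probability.Probability"
begin

definition relay_c :: "(nat \<Rightarrow> real) \<Rightarrow> (nat \<Rightarrow> real) \<Rightarrow> nat \<Rightarrow> real \<Rightarrow> real" where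
  "relay_c lS lG j x = 1 / (lG j * lS j * (lS j - x))"

definition relay_X :: "nat \<Rightarrow> (nat \<Rightarrow> real) \<Rightarrow> (nat \<Rightarrow> real) \<Rightarrow> (nat \<Rightarrow> 'a \<Rightarrow> real) \<Rightarrow> 'a \<Rightarrow> real" where
  "relay_X \<kappa> lS lG Xs \<omega> =
     (\<Sum>j=1..\<kappa>. lG j * (lS j)^2 * Xs j \<omega>) / (1 + (\<Sum>j=1..\<kappa>. lG j * lS j * Xs j \<omega>))"

end

theory Submission
  imports Defs "HOL-Computational_Algebra.Polynomial"
begin

text \<open>
  For nonnegative \<open>X\<^sub>j\<close> the event \<open>X \<le> x\<close> is \<open>\<Sum>\<^sub>j X\<^sub>j / c\<^sub>j(x) \<le> x\<close>, so \<open>F\<^sub>X(x)\<close> is the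
  distribution function, at \<open>x\<close>, of a combination \<open>\<Sum>\<^sub>j Y\<^sub>j / c\<^sub>j\<close> of independent standard
  exponentials with distinct nonzero coefficients of either sign. That distribution function is
  \<open>F\<^sub>J(t) = 1 - \<Sum>\<^bsub>c\<^sub>i > 0\<^esub> w\<^sub>i exp (- c\<^sub>i t)\<close> for \<open>t \<ge> 0\<close> and \<open>\<Sum>\<^bsub>c\<^sub>i < 0\<^esub> w\<^sub>i exp (- c\<^sub>i t)\<close>
  for \<open>t < 0\<close>, where \<open>w\<^sub>i = \<Prod>\<^bsub>m \<noteq> i\<^esub> c\<^sub>m / (c\<^sub>m - c\<^sub>i)\<close>. By induction on \<open>J\<close>: adding one more
  exponential gives \<open>F\<^bsub>J+k\<^esub>(t) = \<integral>\<^sub>0\<^sup>\<infinity> exp (- y) F\<^sub>J(t - y / c\<^sub>k) dy\<close>. Away from \<open>0\<close> the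
  candidate satisfies \<open>F\<^bsub>J+k\<^esub> + F\<^bsub>J+k\<^esub>' / c\<^sub>k = F\<^sub>J\<close>, and it is continuous at \<open>0\<close> because the
  \<open>w\<^sub>i\<close> sum to 1; hence \<open>- exp (- y) F\<^bsub>J+k\<^esub>(t - y / c\<^sub>k)\<close> is an antiderivative of the integrand.
  Finally, for \<open>\<lambda>\<^sub>j\<^sub>+\<^sub>1 < x < \<lambda>\<^sub>j\<close> exactly \<open>c\<^sub>1(x), \<dots>, c\<^sub>j(x)\<close> are positive.
\<close>

section \<open>Lagrange weights\<close>

text \<open>The Lagrange basis polynomial of the nodes \<open>c ` J\<close> belonging to \<open>c i\<close>, evaluated at 0.\<close>
definition lagrange_weight :: "'i set \<Rightarrow> ('i \<Rightarrow> real) \<Rightarrow> 'i \<Rightarrow> real" where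
  "lagrange_weight J c i = (\<Prod>m\<in>J - {i}. c m / (c m - c i))"

lemma sum_lagrange_weight:
  assumes J: "finite J" "J \<noteq> {}" and inj: "inj_on c J"
  shows "(\<Sum>i\<in>J. lagrange_weight J c i) = 1"
proof -
  define p where "p = (\<Sum>i\<in>J. smult (1 / (\<Prod>m\<in>J-{i}. (c m - c i))) (\<Prod>m\<in>J-{i}. [:c m, -1:]))"
  have poly_p: "poly p z = (\<Sum>i\<in>J. (\<Prod>m\<in>J-{i}. (c m - z)) / (\<Prod>m\<in>J-{i}. (c m - c i)))" for z
    by (simp add: p_def poly_sum poly_prod)
  have "degree p \<le> card J - 1"
    unfolding p_def
  proof (rule degree_sum_le[OF J(1)])
    fix i assume i: "i \<in> J"
    have "degree (\<Prod>m\<in>J-{i}. [:c m, -1:]) \<le> (\<Sum>m\<in>J-{i}. degree [:c m, -1:])"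
      using degree_prod_sum_le[of "J-{i}" "\<lambda>m. [:c m, -1:]"] J by (simp add: o_def)
    also have "\<dots> = card J - 1" using i J by simp
    finally show "degree (smult (1 / (\<Prod>m\<in>J-{i}. (c m - c i))) (\<Prod>m\<in>J-{i}. [:c m, -1:])) \<le> card J - 1"
      using degree_smult_le order_trans by blast
  qed
  moreover have card: "card (c ` J) = card J" using card_image[OF inj] .
  ultimately have deg: "degree p < card (c ` J)"
    using J by (metis One_nat_def Suc_pred card_gt_0_iff le_imp_less_Suc)
  have "poly p (c j) = 1" if j: "j \<in> J" for j
  proof -
    have "poly p (c j) = (\<Sum>i\<in>J. if i = j then 1 else 0)"
      unfolding poly_p
    proof (rule sum.cong[OF refl])
      fix i assume i: "i \<in> J"
      have "(\<Prod>m\<in>J-{i}. (c m - c i)) \<noteq> 0"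
        using inj i J by (auto simp: inj_on_def)
      moreover have "(\<Prod>m\<in>J-{i}. (c m - c j)) = 0" if "i \<noteq> j"
        using j that J by (intro prod_zero) auto
      ultimately show "(\<Prod>m\<in>J-{i}. (c m - c j)) / (\<Prod>m\<in>J-{i}. (c m - c i)) = (if i = j then 1 else 0)"
        by auto
    qed
    also have "\<dots> = 1" using j J by simp
    finally show ?thesis .
  qed
  then have "p = 1"
    using deg card J by (intro poly_eqI_degree[where A = "c ` J"]) (auto simp: card_gt_0_iff)
  then have "poly p 0 = 1" by simp
  then show ?thesis unfolding poly_p lagrange_weight_def by (simp add: prod_dividef)
qed

lemma lagrange_weight_insert:
  assumes "finite J" "k \<notin> J" "i \<in> J"
  shows "lagrange_weight (insert k J) c i = lagrange_weight J c i * (c k / (c k - c i))"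
proof -
  have "insert k J - {i} = insert k (J - {i})" using assms by auto
  then show ?thesis using assms unfolding lagrange_weight_def by (simp add: mult.commute)
qed

section \<open>A signed mixture of exponential distribution functions\<close>

definition weighted_exp_sum :: "'i set \<Rightarrow> ('i \<Rightarrow> real) \<Rightarrow> (real \<Rightarrow> bool) \<Rightarrow> real \<Rightarrow> real" where
  "weighted_exp_sum J c R s = (\<Sum>i\<in>{i\<in>J. R (c i)}. lagrange_weight J c i * exp (- c i * s))"

text \<open>The distribution function of \<open>\<Sum>\<^bsub>m\<in>J\<^esub> Y\<^sub>m / c m\<close> for independent standard exponential
  \<open>Y\<^sub>m\<close> and distinct nonzero \<open>c m\<close> (lemma \<open>measure_exp_comb_event\<close>).\<close>
definition exp_comb_cdf :: "'i set \<Rightarrow> ('i \<Rightarrow> real) \<Rightarrow> real \<Rightarrow> real" where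
  "exp_comb_cdf J c s =
     (if 0 \<le> s then 1 - weighted_exp_sum J c (\<lambda>r. 0 < r) s else weighted_exp_sum J c (\<lambda>r. r < 0) s)"

lemma weighted_exp_sum_insert_has_derivative:
  assumes J: "finite J" "k \<notin> J" and inj: "inj_on c (insert k J)"
  shows "(weighted_exp_sum (insert k J) c R has_real_derivative
           c k * (weighted_exp_sum J c R s - weighted_exp_sum (insert k J) c R s)) (at s)"
proof -
  let ?V = "lagrange_weight (insert k J) c" and ?W = "lagrange_weight J c"
  define Q where "Q = {i\<in>J. R (c i)}"
  define e where "e i = exp (- c i * s)" for i
  have rate: "- c i * ?V i * e i = c k * (?W i - ?V i) * e i" if "i \<in> J" for i
  proof -
    have "c k - c i \<noteq> 0" using inj J that by (auto simp: inj_on_def)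
    then show ?thesis using lagrange_weight_insert[OF J that] by (simp add: field_simps)
  qed
  have deriv: "(weighted_exp_sum (insert k J) c R has_real_derivative
      (\<Sum>i\<in>{i\<in>insert k J. R (c i)}. ?V i * (exp (- c i * s) * - c i))) (at s)"
    unfolding weighted_exp_sum_def[abs_def]
    by (intro DERIV_sum DERIV_cmult) (auto intro!: derivative_eq_intros)
  have "(\<Sum>i\<in>Q. - c i * ?V i * e i) = (\<Sum>i\<in>Q. c k * (?W i - ?V i) * e i)"
    by (rule sum.cong[OF refl], rule rate) (simp add: Q_def)
  also have "\<dots> = c k * ((\<Sum>i\<in>Q. ?W i * e i) - (\<Sum>i\<in>Q. ?V i * e i))"
    by (simp add: sum_distrib_left sum_subtractf[symmetric] algebra_simps)
  finally have sumQ: "(\<Sum>i\<in>Q. - c i * ?V i * e i) = c k * ((\<Sum>i\<in>Q. ?W i * e i) - (\<Sum>i\<in>Q. ?V i * e i))" .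
  have Q': "{i\<in>insert k J. R (c i)} = (if R (c k) then insert k Q else Q)"
    by (auto simp: Q_def)
  have Q: "finite Q" "k \<notin> Q" using J by (auto simp: Q_def)
  have "(\<Sum>i\<in>{i\<in>insert k J. R (c i)}. ?V i * (exp (- c i * s) * - c i))
      = (\<Sum>i\<in>{i\<in>insert k J. R (c i)}. - c i * ?V i * e i)"
    by (simp add: e_def algebra_simps)
  also have "\<dots> = c k * ((\<Sum>i\<in>Q. ?W i * e i) - (\<Sum>i\<in>{i\<in>insert k J. R (c i)}. ?V i * e i))"
    unfolding Q' using sumQ Q by (cases "R (c k)") (simp_all add: right_diff_distrib distrib_left)
  also have "\<dots> = c k * (weighted_exp_sum J c R s - weighted_exp_sum (insert k J) c R s)"
    by (simp add: weighted_exp_sum_def e_def Q_def)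
  finally show ?thesis using deriv by (simp only:)
qed

text \<open>The differential equation of convolution with the exponential variable \<open>Y\<^sub>k / c k\<close>.\<close>
lemma exp_comb_cdf_insert_has_derivative:
  assumes "finite J" "k \<notin> J" "inj_on c (insert k J)" "s \<noteq> 0"
  shows "(exp_comb_cdf (insert k J) c has_real_derivative
           c k * (exp_comb_cdf J c s - exp_comb_cdf (insert k J) c s)) (at s)"
proof (cases "0 < s")
  case True
  have "((\<lambda>s. 1 - weighted_exp_sum (insert k J) c (\<lambda>r. 0 < r) s) has_real_derivative
          c k * ((1 - weighted_exp_sum J c (\<lambda>r. 0 < r) s) - (1 - weighted_exp_sum (insert k J) c (\<lambda>r. 0 < r) s))) (at s)"
    using weighted_exp_sum_insert_has_derivative[OF assms(1-3)]
    by (auto intro!: derivative_eq_intros simp: algebra_simps)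
  then have "((\<lambda>s. 1 - weighted_exp_sum (insert k J) c (\<lambda>r. 0 < r) s) has_real_derivative
          c k * (exp_comb_cdf J c s - exp_comb_cdf (insert k J) c s)) (at s)"
    using True by (simp add: exp_comb_cdf_def)
  then show ?thesis
    by (rule has_field_derivative_transform_within_open[where S = "{0<..}"])
       (use True in \<open>auto simp: exp_comb_cdf_def\<close>)
next
  case False
  with assms(4) have "s < 0" by simp
  with weighted_exp_sum_insert_has_derivative[OF assms(1-3)]
  have "(weighted_exp_sum (insert k J) c (\<lambda>r. r < 0) has_real_derivative
          c k * (exp_comb_cdf J c s - exp_comb_cdf (insert k J) c s)) (at s)"
    by (simp add: exp_comb_cdf_def)
  then show ?thesis
    by (rule has_field_derivative_transform_within_open[where S = "{..<0}"])
       (use \<open>s < 0\<close> in \<open>auto simp: exp_comb_cdf_def\<close>)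
qed

lemma continuous_on_weighted_exp_sum: "continuous_on A (weighted_exp_sum J c R)"
  unfolding weighted_exp_sum_def[abs_def] by (intro continuous_intros)

lemma continuous_on_exp_comb_cdf:
  assumes "finite J" "J \<noteq> {}" "inj_on c J" "\<And>i. i \<in> J \<Longrightarrow> c i \<noteq> 0"
  shows "continuous_on UNIV (exp_comb_cdf J c)"
proof -
  have "(\<Sum>i\<in>{i\<in>J. 0 < c i}. lagrange_weight J c i) + (\<Sum>i\<in>{i\<in>J. c i < 0}. lagrange_weight J c i)
      = (\<Sum>i\<in>{i\<in>J. 0 < c i} \<union> {i\<in>J. c i < 0}. lagrange_weight J c i)"
    using assms(1) by (intro sum.union_disjoint[symmetric]) auto
  also have "{i\<in>J. 0 < c i} \<union> {i\<in>J. c i < 0} = J"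
    using assms(4) by (auto simp: linorder_neq_iff)
  finally have "(\<Sum>i\<in>{i\<in>J. 0 < c i}. lagrange_weight J c i) + (\<Sum>i\<in>{i\<in>J. c i < 0}. lagrange_weight J c i)
      = (\<Sum>i\<in>J. lagrange_weight J c i)" .
  then have "1 - weighted_exp_sum J c (\<lambda>r. 0 < r) 0 = weighted_exp_sum J c (\<lambda>r. r < 0) 0"
    using sum_lagrange_weight[OF assms(1-3)] by (simp add: weighted_exp_sum_def)
  then have "continuous_on ({0..} \<union> {..0}) (exp_comb_cdf J c)"
    unfolding exp_comb_cdf_def[abs_def]
    by (intro continuous_on_cases closed_atLeast closed_atMost continuous_on_diff continuous_on_const
          continuous_on_weighted_exp_sum) auto
  moreover have "{0..} \<union> {..0} = (UNIV :: real set)" by auto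
  ultimately show ?thesis by simp
qed

lemma abs_weighted_exp_sum_le:
  assumes "finite J" "\<And>i. i \<in> J \<Longrightarrow> R (c i) \<Longrightarrow> 0 \<le> c i * s"
  shows "\<bar>weighted_exp_sum J c R s\<bar> \<le> (\<Sum>i\<in>J. \<bar>lagrange_weight J c i\<bar>)"
proof -
  have "\<bar>weighted_exp_sum J c R s\<bar> \<le> (\<Sum>i\<in>{i\<in>J. R (c i)}. \<bar>lagrange_weight J c i\<bar> * exp (- c i * s))"
    unfolding weighted_exp_sum_def by (rule order_trans[OF sum_abs]) (simp add: abs_mult)
  also have "\<dots> \<le> (\<Sum>i\<in>{i\<in>J. R (c i)}. \<bar>lagrange_weight J c i\<bar>)"
    using assms(2) by (intro sum_mono) (auto intro!: mult_left_le)
  also have "\<dots> \<le> (\<Sum>i\<in>J. \<bar>lagrange_weight J c i\<bar>)"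
    using assms(1) by (intro sum_mono2) auto
  finally show ?thesis .
qed

lemma abs_exp_comb_cdf_le: "finite J \<Longrightarrow> \<bar>exp_comb_cdf J c s\<bar> \<le> 1 + (\<Sum>i\<in>J. \<bar>lagrange_weight J c i\<bar>)"
  using abs_weighted_exp_sum_le[of J "\<lambda>r. 0 < r" c s] abs_weighted_exp_sum_le[of J "\<lambda>r. r < 0" c s]
  by (auto simp: exp_comb_cdf_def mult_nonpos_nonpos)

lemma has_integral_atLeast_antiderivative:
  fixes f F :: "real \<Rightarrow> real"
  assumes "finite S" "continuous_on {a..} F"
    and "\<And>x. a < x \<Longrightarrow> x \<notin> S \<Longrightarrow> (F has_real_derivative f x) (at x)"
    and "\<And>x. a \<le> x \<Longrightarrow> 0 \<le> f x" and "(F \<longlongrightarrow> L) at_top"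
  shows "(f has_integral (L - F a)) {a..}"
proof (rule has_integral_to_inf)
  have FTC: "(f has_integral (F b - F a)) {a..b}" if "a \<le> b" for b
    using assms(1,3) that
    by (intro fundamental_theorem_of_calculus_interior_strong continuous_on_subset[OF assms(2)])
       (auto simp flip: has_real_derivative_iff_has_vector_derivative)
  then show "f integrable_on {a..b}" for b
    by (cases "a \<le> b") auto
  have "\<forall>\<^sub>F b in at_top. F b - F a = integral {a..b} f"
    using FTC by (auto simp: eventually_at_top_linorder intro!: exI[of _ a] integral_unique[symmetric])
  then show "((\<lambda>b. integral {a..b} f) \<longlongrightarrow> L - F a) at_top"
    by (rule Lim_transform_eventually[OF tendsto_diff[OF assms(5) tendsto_const]])
qed (use assms(4) in auto)

text \<open>The nonnegativity hypothesis, needed for the improper integral, is available inductively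
  because \<open>exp_comb_cdf I c\<close> is a distribution function.\<close>
lemma has_integral_exp_comb_cdf_insert:
  assumes I: "finite I" "k \<notin> I" and inj: "inj_on c (insert k I)"
    and nz: "\<And>i. i \<in> insert k I \<Longrightarrow> c i \<noteq> 0" and nonneg: "\<And>s. 0 \<le> exp_comb_cdf I c s"
  shows "((\<lambda>y. exp (- y) * exp_comb_cdf I c (t - y / c k)) has_integral exp_comb_cdf (insert k I) c t) {0..}"
proof -
  let ?F = "exp_comb_cdf (insert k I) c"
  \<comment> \<open>an antiderivative of the integrand, by \<open>exp_comb_cdf_insert_has_derivative\<close>\<close>
  define \<Phi> where "\<Phi> y = - exp (- y) * ?F (t - y / c k)" for y
  have "continuous_on UNIV ?F"
    using I inj nz by (intro continuous_on_exp_comb_cdf) auto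
  then have "continuous_on {0..} (\<lambda>y. ?F (t - y / c k))"
    by (rule continuous_on_compose2) (use nz in \<open>auto intro!: continuous_intros\<close>)
  then have "continuous_on {0..} \<Phi>"
    unfolding \<Phi>_def by (intro continuous_on_mult) (auto intro!: continuous_intros)
  moreover have "(\<Phi> has_real_derivative exp (- y) * exp_comb_cdf I c (t - y / c k)) (at y)"
    if "y \<notin> {c k * t}" for y
  proof -
    let ?s = "t - y / c k"
    have "?s \<noteq> 0" using that nz by (auto simp: field_simps)
    have "((\<lambda>y. t - y / c k) has_real_derivative - 1 / c k) (at y)"
      using nz by (auto intro!: derivative_eq_intros)
    from DERIV_chain2[OF exp_comb_cdf_insert_has_derivative[OF I inj \<open>?s \<noteq> 0\<close>] this]
    have "((\<lambda>y. ?F (t - y / c k)) has_real_derivative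
        c k * (exp_comb_cdf I c ?s - ?F ?s) * (- 1 / c k)) (at y)" .
    moreover have "((\<lambda>y. - exp (- y)) has_real_derivative exp (- y)) (at y)"
      by (auto intro!: derivative_eq_intros)
    ultimately have "(\<Phi> has_real_derivative
        exp (- y) * ?F ?s + c k * (exp_comb_cdf I c ?s - ?F ?s) * (- 1 / c k) * - exp (- y)) (at y)"
      unfolding \<Phi>_def[abs_def] by (rule DERIV_mult[rotated])
    then show ?thesis using nz by (simp add: field_simps)
  qed
  moreover have "(\<Phi> \<longlongrightarrow> 0) at_top"
  proof (rule Lim_null_comparison)
    let ?B = "1 + (\<Sum>i\<in>insert k I. \<bar>lagrange_weight (insert k I) c i\<bar>)"
    have "norm (\<Phi> y) \<le> ?B * exp (- y)" for y
      using abs_exp_comb_cdf_le[of "insert k I" c "t - y / c k"] I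
      by (simp add: \<Phi>_def abs_mult mult.commute)
    then show "\<forall>\<^sub>F y in at_top. norm (\<Phi> y) \<le> ?B * exp (- y)" by simp
    show "((\<lambda>y. ?B * exp (- y)) \<longlongrightarrow> 0) at_top"
      by (rule tendsto_mult_right_zero[OF filterlim_compose[OF exp_at_bot filterlim_uminus_at_bot_at_top]])
  qed
  ultimately have "((\<lambda>y. exp (- y) * exp_comb_cdf I c (t - y / c k)) has_integral 0 - \<Phi> 0) {0..}"
    by (intro has_integral_atLeast_antiderivative[where S = "{c k * t}"]) (auto simp: nonneg)
  then show ?thesis by (simp add: \<Phi>_def)
qed

section \<open>Weighted sums of independent exponential variables\<close>

definition std_exponential :: "real measure" where
  "std_exponential = density lborel (exponential_density 1)"

lemma sets_std_exponential [measurable_cong]: "sets std_exponential = sets borel"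
  by (simp add: std_exponential_def)

lemma prob_space_std_exponential: "prob_space std_exponential"
  unfolding std_exponential_def by (rule prob_space_exponential_density) simp

lemma borel_measurable_exp_comb_cdf [measurable]:
  assumes [measurable]: "f \<in> borel_measurable M"
  shows "(\<lambda>x. exp_comb_cdf J c (f x)) \<in> borel_measurable M"
  unfolding exp_comb_cdf_def weighted_exp_sum_def by measurable

definition exp_comb_event :: "'i set \<Rightarrow> ('i \<Rightarrow> real) \<Rightarrow> real \<Rightarrow> ('i \<Rightarrow> real) set" where
  "exp_comb_event J c t =
     {x \<in> space (\<Pi>\<^sub>M i\<in>J. std_exponential). (\<forall>m\<in>J. 0 \<le> x m) \<and> (\<Sum>m\<in>J. x m / c m) \<le> t}"

lemma exp_comb_event_in_sets [measurable]:
  "finite J \<Longrightarrow> exp_comb_event J c t \<in> sets (\<Pi>\<^sub>M i\<in>J. std_exponential)"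
  unfolding exp_comb_event_def by measurable

lemma emeasure_exp_comb_event_insert:
  assumes I: "finite I" "k \<notin> I"
  shows "emeasure (\<Pi>\<^sub>M i\<in>insert k I. std_exponential) (exp_comb_event (insert k I) c t)
       = (\<integral>\<^sup>+y. indicator {0..} y * emeasure (\<Pi>\<^sub>M i\<in>I. std_exponential) (exp_comb_event I c (t - y / c k))
            \<partial>std_exponential)"
proof -
  interpret product_prob_space "\<lambda>_. std_exponential"
    by (intro product_prob_spaceI prob_space_std_exponential)
  have "emeasure (\<Pi>\<^sub>M i\<in>insert k I. std_exponential) (exp_comb_event (insert k I) c t)
      = (\<integral>\<^sup>+y. \<integral>\<^sup>+x. indicator (exp_comb_event (insert k I) c t) (x(k := y))
            \<partial>(\<Pi>\<^sub>M i\<in>I. std_exponential) \<partial>std_exponential)"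
    using I by (simp add: product_nn_integral_insert_rev flip: nn_integral_indicator)
  also have "\<dots> = (\<integral>\<^sup>+y. \<integral>\<^sup>+x. indicator {0..} y * indicator (exp_comb_event I c (t - y / c k)) x
            \<partial>(\<Pi>\<^sub>M i\<in>I. std_exponential) \<partial>std_exponential)"
  proof (intro nn_integral_cong)
    fix x y assume x: "x \<in> space (\<Pi>\<^sub>M i\<in>I. std_exponential)" and y: "y \<in> space std_exponential"
    have "x(k := y) \<in> space (\<Pi>\<^sub>M i\<in>insert k I. std_exponential)"
      using x y I by (auto simp: space_PiM PiE_def extensional_def sets_std_exponential)
    moreover have "(\<Sum>m\<in>insert k I. (x(k := y)) m / c m) = y / c k + (\<Sum>m\<in>I. x m / c m)"
      using I by (auto intro!: sum.cong)
    ultimately have "x(k := y) \<in> exp_comb_event (insert k I) c t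
        \<longleftrightarrow> y \<in> {0..} \<and> x \<in> exp_comb_event I c (t - y / c k)"
      using x I unfolding exp_comb_event_def by auto
    then show "indicator (exp_comb_event (insert k I) c t) (x(k := y))
        = (indicator {0..} y * indicator (exp_comb_event I c (t - y / c k)) x :: ennreal)"
      by (auto simp: indicator_def)
  qed
  also have "\<dots> = (\<integral>\<^sup>+y. indicator {0..} y * emeasure (\<Pi>\<^sub>M i\<in>I. std_exponential) (exp_comb_event I c (t - y / c k))
            \<partial>std_exponential)"
    using I by (intro nn_integral_cong) (simp add: nn_integral_cmult_indicator)
  finally show ?thesis .
qed

lemma measure_exp_comb_event:
  assumes "finite I" "inj_on c I" "\<And>i. i \<in> I \<Longrightarrow> c i \<noteq> 0"
  shows "measure (\<Pi>\<^sub>M i\<in>I. std_exponential) (exp_comb_event I c t) = exp_comb_cdf I c t"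
  using assms
proof (induction I arbitrary: t rule: finite_induct)
  case empty
  then show ?case
    by (simp add: PiM_empty exp_comb_event_def exp_comb_cdf_def weighted_exp_sum_def)
next
  case (insert k I)
  interpret PI: prob_space "\<Pi>\<^sub>M i\<in>I. std_exponential"
    by (intro prob_space_PiM prob_space_std_exponential)
  have IH: "measure (\<Pi>\<^sub>M i\<in>I. std_exponential) (exp_comb_event I c s) = exp_comb_cdf I c s" for s
    using insert by (simp add: inj_on_insert)
  have nonneg: "0 \<le> exp_comb_cdf I c s" for s
    using IH[of s] by (metis measure_nonneg)
  have int: "((\<lambda>y. exp (- y) * exp_comb_cdf I c (t - y / c k)) has_integral exp_comb_cdf (insert k I) c t) {0..}"
    using insert nonneg by (intro has_integral_exp_comb_cdf_insert) auto
  have "emeasure (\<Pi>\<^sub>M i\<in>insert k I. std_exponential) (exp_comb_event (insert k I) c t)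
      = (\<integral>\<^sup>+y. indicator {0..} y * ennreal (exp_comb_cdf I c (t - y / c k)) \<partial>std_exponential)"
    using insert.hyps by (simp add: emeasure_exp_comb_event_insert PI.emeasure_eq_measure IH)
  also have "\<dots> = (\<integral>\<^sup>+y. ennreal (indicator {0..} y * (exp (- y) * exp_comb_cdf I c (t - y / c k))) \<partial>lborel)"
    unfolding std_exponential_def
  proof (subst nn_integral_density, measurable, intro nn_integral_cong)
    fix y :: real
    show "ennreal (exponential_density 1 y) * (indicator {0..} y * ennreal (exp_comb_cdf I c (t - y / c k)))
        = ennreal (indicator {0..} y * (exp (- y) * exp_comb_cdf I c (t - y / c k)))"
      by (cases "0 \<le> y") (simp_all add: exponential_density_def nonneg ennreal_mult)
  qed
  also have "\<dots> = ennreal (exp_comb_cdf (insert k I) c t)"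
    using int by (intro nn_integral_has_integral_lebesgue) (auto simp: nonneg)
  finally show ?case
    using has_integral_nonneg[OF int] nonneg by (simp add: measure_def)
qed

lemma (in prob_space) prob_indep_exponential_comb_le:
  assumes I: "finite I" "I \<noteq> {}" and indep: "indep_vars (\<lambda>_. borel) X I"
    and exp: "\<And>i. i \<in> I \<Longrightarrow> distributed M lborel (X i) (exponential_density 1)"
    and c: "inj_on c I" "\<And>i. i \<in> I \<Longrightarrow> c i \<noteq> 0"
  shows "prob {\<omega> \<in> space M. (\<forall>i\<in>I. 0 \<le> X i \<omega>) \<and> (\<Sum>i\<in>I. X i \<omega> / c i) \<le> t} = exp_comb_cdf I c t"
proof -
  have X_meas [measurable]: "X i \<in> borel_measurable M" if "i \<in> I" for i
    using distributed_measurable[OF exp[OF that]] by simp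
  have distr_X: "distr M borel (X i) = std_exponential" if "i \<in> I" for i
  proof -
    have "distr M borel (X i) = distr M lborel (X i)" by (rule distr_cong) auto
    also have "\<dots> = std_exponential"
      using distributed_distr_eq_density[OF exp[OF that]] by (simp add: std_exponential_def)
    finally show ?thesis .
  qed
  define Y where "Y \<omega> = (\<lambda>i\<in>I. X i \<omega>)" for \<omega>
  have Y_meas: "Y \<in> M \<rightarrow>\<^sub>M (\<Pi>\<^sub>M i\<in>I. std_exponential)"
    unfolding Y_def by (intro measurable_restrict) (simp add: measurable_cong_sets[OF refl sets_std_exponential])
  have "distr M (\<Pi>\<^sub>M i\<in>I. std_exponential) Y = distr M (\<Pi>\<^sub>M i\<in>I. borel) Y"
    by (intro distr_cong refl sets_PiM_cong) (simp add: sets_std_exponential)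
  also have "\<dots> = (\<Pi>\<^sub>M i\<in>I. distr M borel (X i))"
    using indep I unfolding Y_def by (subst (asm) indep_vars_iff_distr_eq_PiM') auto
  also have "\<dots> = (\<Pi>\<^sub>M i\<in>I. std_exponential)"
    by (intro PiM_cong refl) (simp add: distr_X)
  finally have distr_Y: "distr M (\<Pi>\<^sub>M i\<in>I. std_exponential) Y = (\<Pi>\<^sub>M i\<in>I. std_exponential)" .
  have "{\<omega> \<in> space M. (\<forall>i\<in>I. 0 \<le> X i \<omega>) \<and> (\<Sum>i\<in>I. X i \<omega> / c i) \<le> t}
      = Y -` exp_comb_event I c t \<inter> space M"
    using measurable_space[OF Y_meas] by (auto simp: exp_comb_event_def Y_def)
  then have "prob {\<omega> \<in> space M. (\<forall>i\<in>I. 0 \<le> X i \<omega>) \<and> (\<Sum>i\<in>I. X i \<omega> / c i) \<le> t}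
      = measure (distr M (\<Pi>\<^sub>M i\<in>I. std_exponential) Y) (exp_comb_event I c t)"
    using Y_meas I by (simp add: measure_distr)
  also have "\<dots> = exp_comb_cdf I c t"
    using distr_Y measure_exp_comb_event[OF I(1) c] by simp
  finally show ?thesis .
qed

lemma (in prob_space) AE_exponential_pos:
  assumes "distributed M lborel X (exponential_density l)" "0 < l"
  shows "AE \<omega> in M. 0 < X \<omega>"
proof -
  have [measurable]: "X \<in> borel_measurable M"
    using distributed_measurable[OF assms(1)] by simp
  have "prob {\<omega> \<in> space M. X \<omega> \<le> 0} = 0"
    using exponential_distributedD_le[OF assms(1) order_refl assms(2)] by simp
  then show ?thesis by (subst (asm) prob_Collect_eq_0) (auto simp: not_le)
qed

section \<open>The relay SNR factor\<close>

text \<open>If \<open>lS j = x\<close> then \<open>relay_c lS lG j x = 0\<close> (division by zero), and \<open>Xs j \<omega> / 0 = 0\<close> is then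
  exactly the vanishing coefficient \<open>lG j * lS j * (lS j - x)\<close> of \<open>Xs j \<omega>\<close>.\<close>
lemma relay_X_le_iff:
  assumes "0 \<le> (\<Sum>j=1..\<kappa>. lG j * lS j * Xs j \<omega>)"
  shows "relay_X \<kappa> lS lG Xs \<omega> \<le> x \<longleftrightarrow> (\<Sum>j=1..\<kappa>. Xs j \<omega> / relay_c lS lG j x) \<le> x"
proof -
  define A where "A = (\<Sum>j=1..\<kappa>. lG j * (lS j)\<^sup>2 * Xs j \<omega>)"
  define B where "B = (\<Sum>j=1..\<kappa>. lG j * lS j * Xs j \<omega>)"
  have "(\<Sum>j=1..\<kappa>. Xs j \<omega> / relay_c lS lG j x) = A - x * B"
    by (simp add: A_def B_def relay_c_def sum_distrib_left sum_subtractf[symmetric]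
        power2_eq_square algebra_simps)
  moreover have "relay_X \<kappa> lS lG Xs \<omega> \<le> x \<longleftrightarrow> A \<le> x * (1 + B)"
    using assms by (simp add: relay_X_def A_def B_def pos_divide_le_eq)
  ultimately show ?thesis by (simp add: distrib_left diff_le_eq)
qed

locale relay_model = prob_space M for M :: "'a measure" +
  fixes \<kappa> :: nat and lS lG :: "nat \<Rightarrow> real" and Xs :: "nat \<Rightarrow> 'a \<Rightarrow> real"
  assumes kappa_pos: "1 \<le> \<kappa>"
    and lS_antimono: "\<And>i j. 1 \<le> i \<Longrightarrow> i \<le> j \<Longrightarrow> j \<le> \<kappa> \<Longrightarrow> lS j \<le> lS i"
    and lS_last_pos: "0 < lS \<kappa>"
    and lG_pos: "\<And>j. 1 \<le> j \<Longrightarrow> j \<le> \<kappa> \<Longrightarrow> 0 < lG j"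
    and indep: "indep_vars (\<lambda>_. borel) Xs {1..\<kappa>}"
    and exponential: "\<And>j. 1 \<le> j \<Longrightarrow> j \<le> \<kappa> \<Longrightarrow> distributed M lborel (Xs j) (exponential_density 1)"
begin

lemma lS_pos: "j \<in> {1..\<kappa>} \<Longrightarrow> 0 < lS j"
  using lS_antimono[of j \<kappa>] lS_last_pos by auto

lemma Xs_measurable [measurable]: "j \<in> {1..\<kappa>} \<Longrightarrow> Xs j \<in> borel_measurable M"
  using distributed_measurable[OF exponential] by auto

lemma relay_event_in_sets [measurable]: "{\<omega> \<in> space M. relay_X \<kappa> lS lG Xs \<omega> \<le> x} \<in> events"
  unfolding relay_X_def by measurable

lemma AE_Xs_pos: "AE \<omega> in M. \<forall>j\<in>{1..\<kappa>}. 0 < Xs j \<omega>"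
  using exponential by (intro AE_finite_allI AE_exponential_pos) auto

lemma relay_X_pos_less:
  assumes pos: "\<forall>j\<in>{1..\<kappa>}. 0 < Xs j \<omega>"
  shows "0 < relay_X \<kappa> lS lG Xs \<omega>" and "relay_X \<kappa> lS lG Xs \<omega> < lS 1"
proof -
  define A where "A = (\<Sum>j=1..\<kappa>. lG j * (lS j)\<^sup>2 * Xs j \<omega>)"
  define B where "B = (\<Sum>j=1..\<kappa>. lG j * lS j * Xs j \<omega>)"
  have pos_terms: "0 < lG j * lS j * Xs j \<omega>" "0 < lG j * (lS j)\<^sup>2 * Xs j \<omega>"
    if "j \<in> {1..\<kappa>}" for j
    using pos that lS_pos[OF that] lG_pos[of j] by auto
  have "0 < A" "0 < B"
    unfolding A_def B_def using kappa_pos pos_terms by (auto intro!: sum_pos)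
  have "A \<le> lS 1 * B"
    unfolding A_def B_def sum_distrib_left
  proof (rule sum_mono)
    fix j assume j: "j \<in> {1..\<kappa>}"
    then have "lS j * (lG j * lS j * Xs j \<omega>) \<le> lS 1 * (lG j * lS j * Xs j \<omega>)"
      using lS_antimono[of 1 j] pos_terms(1)[OF j] by (intro mult_right_mono) auto
    then show "lG j * (lS j)\<^sup>2 * Xs j \<omega> \<le> lS 1 * (lG j * lS j * Xs j \<omega>)"
      by (simp add: power2_eq_square mult_ac)
  qed
  have relay: "relay_X \<kappa> lS lG Xs \<omega> = A / (1 + B)" by (simp add: relay_X_def A_def B_def)
  show "0 < relay_X \<kappa> lS lG Xs \<omega>" using \<open>0 < A\<close> \<open>0 < B\<close> by (simp add: relay)
  show "relay_X \<kappa> lS lG Xs \<omega> < lS 1"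
    using \<open>A \<le> lS 1 * B\<close> \<open>0 < B\<close> lS_pos[of 1] kappa_pos by (simp add: relay divide_less_eq algebra_simps)
qed

lemma AE_relay_X_pos_less: "AE \<omega> in M. 0 < relay_X \<kappa> lS lG Xs \<omega> \<and> relay_X \<kappa> lS lG Xs \<omega> < lS 1"
  using AE_Xs_pos by (rule eventually_mono) (intro conjI relay_X_pos_less)

lemma relay_cdf_nonpos:
  assumes "x \<le> 0" shows "prob {\<omega> \<in> space M. relay_X \<kappa> lS lG Xs \<omega> \<le> x} = 0"
proof -
  have "AE \<omega> in M. \<not> relay_X \<kappa> lS lG Xs \<omega> \<le> x"
    using AE_relay_X_pos_less by (rule eventually_mono) (use assms in auto)
  then show ?thesis by (subst prob_Collect_eq_0) auto
qed

lemma relay_cdf_ge: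
  assumes "lS 1 \<le> x" shows "prob {\<omega> \<in> space M. relay_X \<kappa> lS lG Xs \<omega> \<le> x} = 1"
proof -
  have "AE \<omega> in M. relay_X \<kappa> lS lG Xs \<omega> \<le> x"
    using AE_relay_X_pos_less by (rule eventually_mono) (use assms in auto)
  then show ?thesis by (subst prob_Collect_eq_1) auto
qed

lemma relay_c_sign:
  assumes j: "j \<in> {1..\<kappa>}" and lower: "(if j = \<kappa> then 0 else lS (j + 1)) < x" and upper: "x < lS j"
    and m: "m \<in> {1..\<kappa>}"
  shows "0 < relay_c lS lG m x \<longleftrightarrow> m \<le> j" and "relay_c lS lG m x \<noteq> 0"
proof -
  have side: "if m \<le> j then x < lS m else lS m < x"
  proof (cases "m \<le> j")
    case True
    then show ?thesis using lS_antimono[of m j] j m upper by auto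
  next
    case False
    then have "j \<noteq> \<kappa>" "lS m \<le> lS (j + 1)" using lS_antimono[of "j + 1" m] j m by auto
    then show ?thesis using False lower by auto
  qed
  define p where "p = lG m * lS m"
  have "0 < p" using lS_pos[OF m] lG_pos m by (auto simp: p_def)
  have c: "relay_c lS lG m x = 1 / (p * (lS m - x))" by (simp add: relay_c_def p_def)
  have "0 < relay_c lS lG m x \<longleftrightarrow> x < lS m"
    using \<open>0 < p\<close> by (simp add: c zero_less_mult_iff)
  then show "0 < relay_c lS lG m x \<longleftrightarrow> m \<le> j" using side by (auto split: if_splits)
  show "relay_c lS lG m x \<noteq> 0"
    using side \<open>0 < p\<close> by (auto simp: c split: if_splits)
qed

lemma relay_cdf_between:
  assumes j: "j \<in> {1..\<kappa>}" and lower: "(if j = \<kappa> then 0 else lS (j + 1)) < x" and upper: "x < lS j"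
    and distinct: "\<forall>i\<in>{1..\<kappa>}. \<forall>m\<in>{1..\<kappa>}. i \<noteq> m \<longrightarrow> relay_c lS lG i x \<noteq> relay_c lS lG m x"
  shows "prob {\<omega> \<in> space M. relay_X \<kappa> lS lG Xs \<omega> \<le> x}
       = 1 - (\<Sum>i=1..j. (\<Prod>m \<in> {1..\<kappa>} - {i}.
                relay_c lS lG m x / (relay_c lS lG m x - relay_c lS lG i x))
              * exp (- relay_c lS lG i x * x))"
proof -
  define c where "c m = relay_c lS lG m x" for m
  note c_sign = relay_c_sign[OF j lower upper, folded c_def]
  have "0 < x"
    using lower lS_pos[of "j + 1"] j by (auto split: if_splits)
  have AE_iff: "AE \<omega> in M. relay_X \<kappa> lS lG Xs \<omega> \<le> x
      \<longleftrightarrow> (\<forall>m\<in>{1..\<kappa>}. 0 \<le> Xs m \<omega>) \<and> (\<Sum>m\<in>{1..\<kappa>}. Xs m \<omega> / c m) \<le> x"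
    using AE_Xs_pos
  proof (rule eventually_mono)
    fix \<omega> assume pos: "\<forall>m\<in>{1..\<kappa>}. 0 < Xs m \<omega>"
    then have "0 \<le> (\<Sum>m=1..\<kappa>. lG m * lS m * Xs m \<omega>)"
      using lS_pos lG_pos by (intro sum_nonneg) (auto intro!: mult_nonneg_nonneg less_imp_le)
    moreover have "\<forall>m\<in>{1..\<kappa>}. 0 \<le> Xs m \<omega>"
      using pos by (meson less_imp_le)
    ultimately show "relay_X \<kappa> lS lG Xs \<omega> \<le> x
        \<longleftrightarrow> (\<forall>m\<in>{1..\<kappa>}. 0 \<le> Xs m \<omega>) \<and> (\<Sum>m\<in>{1..\<kappa>}. Xs m \<omega> / c m) \<le> x"
      using relay_X_le_iff[where Xs = Xs and lS = lS and lG = lG] by (simp add: c_def)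
  qed
  have "prob {\<omega> \<in> space M. relay_X \<kappa> lS lG Xs \<omega> \<le> x}
      = prob {\<omega> \<in> space M. (\<forall>m\<in>{1..\<kappa>}. 0 \<le> Xs m \<omega>) \<and> (\<Sum>m\<in>{1..\<kappa>}. Xs m \<omega> / c m) \<le> x}"
    (is "prob ?A = prob ?B")
  proof (rule measure_eq_AE)
    show "AE \<omega> in M. \<omega> \<in> ?A \<longleftrightarrow> \<omega> \<in> ?B"
      using AE_iff by (rule eventually_mono) simp
    show "?A \<in> events" "?B \<in> events" by measurable
  qed
  also have "\<dots> = exp_comb_cdf {1..\<kappa>} c x"
  proof (rule prob_indep_exponential_comb_le)
    show "inj_on c {1..\<kappa>}" using distinct unfolding inj_on_def c_def by blast
    show "\<And>i. i \<in> {1..\<kappa>} \<Longrightarrow> distributed M lborel (Xs i) (exponential_density 1)"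
      using exponential by simp
  qed (use indep c_sign(2) kappa_pos in simp_all)
  also have "\<dots> = 1 - (\<Sum>i=1..j. lagrange_weight {1..\<kappa>} c i * exp (- c i * x))"
  proof -
    have "{i\<in>{1..\<kappa>}. 0 < c i} = {1..j}" using c_sign(1) j by auto
    then show ?thesis using \<open>0 < x\<close> by (simp add: exp_comb_cdf_def weighted_exp_sum_def)
  qed
  finally show ?thesis by (simp add: lagrange_weight_def c_def)
qed

end

theorem mainTheorem3:
  fixes M :: "'a measure" and \<kappa> :: nat
    and lS lG :: "nat \<Rightarrow> real" and Xs :: "nat \<Rightarrow> 'a \<Rightarrow> real"
  assumes "prob_space M"
    and "\<kappa> \<ge> 1"
    and "\<And>i j. 1 \<le> i \<Longrightarrow> i \<le> j \<Longrightarrow> j \<le> \<kappa> \<Longrightarrow> lS j \<le> lS i"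
    and "lS \<kappa> > 0"
    and "\<And>j. 1 \<le> j \<Longrightarrow> j \<le> \<kappa> \<Longrightarrow> lG j > 0"
    and "prob_space.indep_vars M (\<lambda>_. borel) Xs {1..\<kappa>}"
    and "\<And>j. 1 \<le> j \<Longrightarrow> j \<le> \<kappa> \<Longrightarrow> distributed M lborel (Xs j) (exponential_density 1)"
  shows "(\<forall>x::real. x \<le> 0 \<longrightarrow>
            measure M {\<omega> \<in> space M. relay_X \<kappa> lS lG Xs \<omega> \<le> x} = 0)
       \<and> (\<forall>x::real. x \<ge> lS 1 \<longrightarrow>
            measure M {\<omega> \<in> space M. relay_X \<kappa> lS lG Xs \<omega> \<le> x} = 1)
       \<and> (\<forall>j \<in> {1..\<kappa>}. \<forall>x::real.
            (if j = \<kappa> then 0 else lS (j + 1)) < x \<and> x < lS j \<and>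
            (\<forall>i \<in> {1..\<kappa>}. \<forall>m \<in> {1..\<kappa>}. i \<noteq> m \<longrightarrow> relay_c lS lG i x \<noteq> relay_c lS lG m x)
            \<longrightarrow> measure M {\<omega> \<in> space M. relay_X \<kappa> lS lG Xs \<omega> \<le> x} =
                1 - (\<Sum>i=1..j. (\<Prod>m \<in> {1..\<kappa>} - {i}.
                        relay_c lS lG m x / (relay_c lS lG m x - relay_c lS lG i x))
                      * exp (- relay_c lS lG i x * x)))"
proof -
  interpret relay_model M \<kappa> lS lG Xs
    using assms by (intro relay_model.intro relay_model_axioms.intro) simp_all
  show ?thesis
    by (simp add: relay_cdf_nonpos relay_cdf_ge relay_cdf_between)
qed

end
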